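(* Let $\rho \in \mathcal{D}(\mathcal{H}_{B})$. If $\rho$ satisfies $\tr[\rho P_{DC}]=q$, then $\tr[\rho \Pi^N] \geq 1-\frac{q}{\lambda_{\mathrm{min}}^{N+1}}$, where $\Pi^N=\sum_{k=0}^N \tilde{\Pi}^k$. $N$ must be larger than 1 to obtain a nontrivial bound.
   Context: $\mathcal{H}_B$ is a two-polarization-mode Fock space. Bob's double-click POVM is $P_{DC} = p_{z} P_{H/V}+ (1-p_{z}) P_{D/A}$, where $P_{H/V} = \sum_{n_V=1}^\infty \sum_{n_H=1}^\infty |n_H,n_V\rangle\langle n_H,n_V|$ and $P_{D/A}$ is analogous in the diagonal basis, $p_z$ being the probability of choosing the $H/V$ basis. $\tilde{\Pi}^k = \sum_{n=0}^k |n,k-n\rangle\langle n,k-n|_{H/V}$ projects onto the total $k$-photon subspace, and $\lambda^{k}_{\min}$ denotes the smallest eigenvalue of $\tilde{\Pi}^k P_{DC}\tilde{\Pi}^k$, given by $\lambda^k_{\min}=\frac12-\frac12\sqrt{(2p_z-1)^2+8\cdot 2^{-k}(p_z-p_z^2)}$ for $k$ odd and $\frac12-\frac12\sqrt{(2p_z-1)^2+16\cdot 2^{-k}(p_z-p_z^2)}$ for $k$ even; this sequence is nondecreasing in $k$. *)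

theory Defs
  imports "HOL-Analysis.Analysis"
begin

text \<open>The two-polarization-mode Fock space H_B is represented in its Fock basis
  |n_H, n_V>, indexed by pairs (n_H, n_V) :: nat \<times> nat. Operators are given by
  their matrices in this orthonormal basis.\<close>

type_synonym fock_idx = "nat \<times> nat"
type_synonym fock_op = "fock_idx \<Rightarrow> fock_idx \<Rightarrow> complex"

definition density_matrix :: "fock_op \<Rightarrow> bool" where
  "density_matrix \<rho> \<longleftrightarrow>
     (\<forall>a b. \<rho> a b = cnj (\<rho> b a)) \<and>
     (\<forall>F (v :: fock_idx \<Rightarrow> complex). finite F \<longrightarrow>
        0 \<le> Re (\<Sum>a\<in>F. \<Sum>b\<in>F. cnj (v a) * \<rho> a b * v b)) \<and>
     ((\<lambda>a. \<rho> a a) has_sum 1) UNIV"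

definition fock_block :: "nat \<Rightarrow> fock_idx set" where
  "fock_block k = {(a, b). a + b = k}"

text \<open>Amplitude <r, k-r |_{H/V} | m, k-m >_{D/A}, where
  a_D^dag = (a_H^dag + a_V^dag)/sqrt 2 and a_A^dag = (a_H^dag - a_V^dag)/sqrt 2.\<close>
definition da_amp :: "nat \<Rightarrow> nat \<Rightarrow> nat \<Rightarrow> real" where
  "da_amp k m r =
     (1 / sqrt (2 ^ k)) * sqrt (fact r * fact (k - r) / (fact m * fact (k - m))) *
     (\<Sum>j\<le>min m r. real (m choose j) * real ((k - m) choose (r - j)) *
                      (-1) ^ ((k - m) - (r - j)))"

definition P_HV :: "fock_op" where
  "P_HV a b = (if a = b \<and> fst a \<ge> 1 \<and> snd a \<ge> 1 then 1 else 0)"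

text \<open>P_{D/A} = sum over m >= 1, k-m >= 1 of |m,k-m>_{D/A}<m,k-m|_{D/A}
  (block diagonal in the total photon number k).\<close>
definition P_DA :: "fock_op" where
  "P_DA a b = (if fst a + snd a = fst b + snd b then
      (let k = fst a + snd a in
         complex_of_real (\<Sum>m\<in>{1..k-1}. da_amp k m (fst a) * da_amp k m (fst b)))
      else 0)"

definition P_DC :: "real \<Rightarrow> fock_op" where
  "P_DC pz a b = complex_of_real pz * P_HV a b + complex_of_real (1 - pz) * P_DA a b"

definition Pi_tilde :: "nat \<Rightarrow> fock_op" where
  "Pi_tilde k a b = (if a = b \<and> fst a + snd a = k then 1 else 0)"

definition Pi_N :: "nat \<Rightarrow> fock_op" where
  "Pi_N N a b = (\<Sum>k\<le>N. Pi_tilde k a b)"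

text \<open>tr[rho P] for an operator P that is block diagonal with respect to the total
  photon number: tr[rho P] = sum_k sum_{a,b in block k} rho_{ab} P_{ba}.\<close>
definition tr_block :: "fock_op \<Rightarrow> fock_op \<Rightarrow> real" where
  "tr_block \<rho> P = (\<Sum>\<^sub>\<infinity>k. Re (\<Sum>a\<in>fock_block k. \<Sum>b\<in>fock_block k. \<rho> a b * P b a))"

definition lambda_min :: "real \<Rightarrow> nat \<Rightarrow> real" where
  "lambda_min pz k =
     (if odd k then 1/2 - 1/2 * sqrt ((2*pz - 1)^2 + 8 * (1/2)^k * (pz - pz^2))
      else 1/2 - 1/2 * sqrt ((2*pz - 1)^2 + 16 * (1/2)^k * (pz - pz^2)))"

end

(*
  On the k-photon block (k >= 1), P_HV removes |0,k> and |k,0>, and P_DA removes their D/A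
  counterparts u = |0,k>_DA and v = |k,0>_DA, whose H/V overlaps with |0,k>, |k,0> all have
  modulus 2^(-k/2). The block of P_DC is therefore I - (pz E + (1 - pz) F), with E and F
  orthogonal projections of rank two; the top eigenvalue of pz E + (1 - pz) F is
  1/2 + 1/2 sqrt (1 - 4 pz (1 - pz) sin^2 theta) for the smallest principal angle theta between
  ran E and ran F, which gives lambda_min^k. Hence tr[rho_k P_DC] >= lambda_min^k tr[rho_k] for
  every k >= 3, since a positive semidefinite block rho_k is a sum of rank-one terms.
  Summing over k > N and using that lambda_min^k is nondecreasing yields
  q >= lambda_min^(N+1) (1 - tr[rho Pi^N]).
*)

theory Submission
  imports Defs "HOL-Computational_Algebra.Polynomial"
begin

definition quad_form :: "'a set \<Rightarrow> ('a \<Rightarrow> 'a \<Rightarrow> real) \<Rightarrow> ('a \<Rightarrow> real) \<Rightarrow> real" where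
  "quad_form I A v = (\<Sum>a\<in>I. \<Sum>b\<in>I. v a * A a b * v b)"

definition psd_on :: "'a set \<Rightarrow> ('a \<Rightarrow> 'a \<Rightarrow> real) \<Rightarrow> bool" where
  "psd_on I A \<longleftrightarrow> (\<forall>a\<in>I. \<forall>b\<in>I. A a b = A b a) \<and> (\<forall>v. 0 \<le> quad_form I A v)"

lemma quad_form_cong:
  "(\<And>a b. a \<in> I \<Longrightarrow> b \<in> I \<Longrightarrow> A a b = B a b) \<Longrightarrow> (\<And>a. a \<in> I \<Longrightarrow> v a = w a)
    \<Longrightarrow> quad_form I A v = quad_form I B w"
  unfolding quad_form_def by (intro sum.cong) auto

lemma quad_form_mono_neutral:
  assumes "finite I" "J \<subseteq> I" "\<And>a. a \<in> I - J \<Longrightarrow> v a = 0"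
  shows "quad_form I A v = quad_form J A v"
proof -
  have "quad_form I A v = (\<Sum>a\<in>I. \<Sum>b\<in>J. v a * A a b * v b)"
    unfolding quad_form_def
    by (intro sum.cong refl sum.mono_neutral_right) (use assms finite_subset in auto)
  also have "\<dots> = quad_form J A v"
    unfolding quad_form_def by (intro sum.mono_neutral_right) (use assms in auto)
  finally show ?thesis .
qed

lemma quad_form_insert:
  assumes "finite F" "x \<notin> F"
  shows "quad_form (insert x F) A v = v x * A x x * v x + (\<Sum>b\<in>F. v x * A x b * v b)
     + (\<Sum>a\<in>F. v a * A a x * v x) + quad_form F A v"
  using assms unfolding quad_form_def by (simp add: sum.distrib)

lemma psd_on_subset:
  assumes "psd_on I A" "J \<subseteq> I" "finite I"
  shows "psd_on J A"
  unfolding psd_on_def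
proof (intro conjI allI)
  show "\<forall>a\<in>J. \<forall>b\<in>J. A a b = A b a" using assms unfolding psd_on_def by blast
  fix v
  have "0 \<le> quad_form I A (\<lambda>a. if a \<in> J then v a else 0)"
    using assms(1) unfolding psd_on_def by blast
  also have "\<dots> = quad_form J A (\<lambda>a. if a \<in> J then v a else 0)"
    by (rule quad_form_mono_neutral) (use assms in auto)
  also have "\<dots> = quad_form J A v"
    by (rule quad_form_cong) auto
  finally show "0 \<le> quad_form J A v" .
qed

lemma psd_on_diag_nonneg:
  assumes "psd_on I A" "finite I" "x \<in> I"
  shows "0 \<le> A x x"
proof -
  have "0 \<le> quad_form {x} A (\<lambda>_. 1)"
    using psd_on_subset[OF assms(1) _ assms(2)] assms(3) unfolding psd_on_def by simp
  then show ?thesis by (simp add: quad_form_def)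
qed

lemma psd_on_zero_diag_row:
  assumes "psd_on I A" "finite I" "x \<in> I" "b \<in> I" "A x x = 0"
  shows "A x b = 0"
proof (cases "b = x")
  case False
  define v where "v t a = (if a = x then t else if a = b then 1 else (0::real))" for t a
  have "0 \<le> quad_form {x, b} A (v t)" for t
    using psd_on_subset[OF assms(1) _ assms(2)] assms(3,4) unfolding psd_on_def by simp
  moreover have "quad_form {x, b} A (v t) = 2 * t * A x b + A b b" for t
    using False assms(1,3,4,5) unfolding quad_form_def psd_on_def v_def by (simp add: algebra_simps)
  ultimately have ge: "0 \<le> 2 * t * A x b + A b b" for t by metis
  show ?thesis
  proof (rule ccontr)
    assume "A x b \<noteq> 0"
    then have "2 * (- (\<bar>A b b\<bar> + 1) / (2 * A x b)) * A x b + A b b = A b b - (\<bar>A b b\<bar> + 1)"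
      by (simp add: field_simps)
    with ge show False by (smt (verit))
  qed
qed (use assms in simp)

lemma psd_on_schur_complement:
  assumes psd: "psd_on (insert x F) A" and "finite F" "x \<notin> F" and pos: "A x x > 0"
  shows "psd_on F (\<lambda>a b. A a b - A x a * A x b / A x x)"
proof -
  have sym: "A a b = A b a" if "a \<in> insert x F" "b \<in> insert x F" for a b
    using psd that unfolding psd_on_def by blast
  have "0 \<le> quad_form F (\<lambda>a b. A a b - A x a * A x b / A x x) v" for v
  proof -
    define S where "S = (\<Sum>b\<in>F. A x b * v b)"
    \<comment> \<open>Completing v at x by the minimising value turns the form into the Schur complement.\<close>
    define w where "w = v(x := - S / A x x)"
    have wF: "w b = v b" if "b \<in> F" for b
      using that \<open>x \<notin> F\<close> unfolding w_def by auto
    have "(\<Sum>a\<in>F. w a * A a x * w x) = w x * S" "(\<Sum>b\<in>F. w x * A x b * w b) = w x * S"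
      unfolding S_def sum_distrib_left using wF sym by (auto intro!: sum.cong)
    moreover have "quad_form F A w = quad_form F A v"
      by (rule quad_form_cong) (simp_all add: wF)
    ultimately have "quad_form (insert x F) A w = quad_form F A v - S * S / A x x"
      unfolding quad_form_insert[OF \<open>finite F\<close> \<open>x \<notin> F\<close>] using pos
      by (simp add: w_def field_simps power2_eq_square)
    also have "S * S / A x x = (\<Sum>a\<in>F. \<Sum>b\<in>F. v a * (A x a * A x b / A x x) * v b)"
      unfolding S_def sum_product sum_divide_distrib by (intro sum.cong refl) (simp add: ac_simps)
    finally have "quad_form (insert x F) A w
        = quad_form F (\<lambda>a b. A a b - A x a * A x b / A x x) v"
      unfolding quad_form_def by (simp add: algebra_simps sum_subtractf)
    moreover have "0 \<le> quad_form (insert x F) A w" using psd unfolding psd_on_def by blast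
    ultimately show ?thesis by simp
  qed
  with sym show ?thesis unfolding psd_on_def by (auto simp: mult.commute)
qed

text \<open>The rank-one part is (A x a) (A x b) / A x x, leaving the Schur complement on F; when
  A x x = 0 the whole row x vanishes and nothing needs to be split off.\<close>
lemma psd_on_split_rank_one:
  assumes psd: "psd_on (insert x F) A" and "finite F" "x \<notin> F"
  obtains w where "psd_on F (\<lambda>a b. A a b - w a * w b)" "\<And>a. a \<in> insert x F \<Longrightarrow> A x a = w x * w a"
proof (cases "A x x = 0")
  case True
  have fin: "finite (insert x F)" using assms by simp
  show ?thesis
  proof (rule that[of "\<lambda>_. 0"])
    show "psd_on F (\<lambda>a b. A a b - 0 * 0)"
      using psd_on_subset[OF psd subset_insertI fin] by simp
    show "A x a = 0 * 0" if "a \<in> insert x F" for a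
      using psd_on_zero_diag_row[OF psd fin _ that True] by simp
  qed
next
  case False
  then have pos: "A x x > 0"
    using psd_on_diag_nonneg[OF psd, of x] assms by simp
  define w where "w a = A x a / sqrt (A x x)" for a
  have w: "w a * w b = A x a * A x b / A x x" for a b
    using pos by (simp add: w_def real_sqrt_mult[symmetric] power2_eq_square[symmetric])
  show ?thesis
  proof (rule that[of w])
    show "psd_on F (\<lambda>a b. A a b - w a * w b)"
      unfolding w using psd_on_schur_complement[OF psd assms(2,3) pos] .
    show "A x a = w x * w a" for a
      using pos by (simp add: w)
  qed
qed

lemma psd_on_gram_decomposition:
  assumes "finite I" "psd_on I A"
  shows "\<exists>(n::nat) vs. \<forall>a\<in>I. \<forall>b\<in>I. A a b = (\<Sum>i<n. vs i a * vs i b)"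
  using assms
proof (induction I arbitrary: A rule: finite_induct)
  case empty
  then show ?case by simp
next
  case (insert x F)
  obtain w where w: "psd_on F (\<lambda>a b. A a b - w a * w b)"
    and A_row: "\<And>a. a \<in> insert x F \<Longrightarrow> A x a = w x * w a"
    using psd_on_split_rank_one[OF insert.prems insert.hyps] by blast
  from insert.IH[OF w] obtain n :: nat and vs
    where vs: "\<forall>a\<in>F. \<forall>b\<in>F. A a b - w a * w b = (\<Sum>i<n. vs i a * vs i b)"
    by blast
  have sym: "A a b = A b a" if "a \<in> insert x F" "b \<in> insert x F" for a b
    using insert.prems that unfolding psd_on_def by blast
  define vs' where "vs' i = (case i of 0 \<Rightarrow> w | Suc j \<Rightarrow> (vs j)(x := 0))" for i
  have "A a b = (\<Sum>i<Suc n. vs' i a * vs' i b)" if "a \<in> insert x F" "b \<in> insert x F" for a b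
  proof -
    have "(\<Sum>i<Suc n. vs' i a * vs' i b) = w a * w b + (\<Sum>i<n. ((vs i)(x := 0)) a * ((vs i)(x := 0)) b)"
      unfolding sum.lessThan_Suc_shift vs'_def by simp
    also have "\<dots> = A a b"
      using that vs A_row sym[of a x] insert.hyps(2) by (cases "a = x"; cases "b = x") force+
    finally show ?thesis ..
  qed
  then show ?case by blast
qed

lemma trace_gram_eq_sum_quad_form:
  assumes "\<forall>a\<in>I. \<forall>b\<in>I. R a b = (\<Sum>i<n. vs i a * vs i b)"
  shows "(\<Sum>a\<in>I. \<Sum>b\<in>I. R a b * A b a) = (\<Sum>i<n. quad_form I A (vs i))"
proof -
  have "(\<Sum>a\<in>I. \<Sum>b\<in>I. R a b * A b a) = (\<Sum>a\<in>I. \<Sum>b\<in>I. \<Sum>i<n. vs i b * A b a * vs i a)"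
    using assms by (intro sum.cong refl) (simp add: sum_distrib_left sum_distrib_right ac_simps)
  also have "\<dots> = (\<Sum>i<n. \<Sum>b\<in>I. \<Sum>a\<in>I. vs i b * A b a * vs i a)"
    by (subst sum.swap) (simp add: sum.swap[of _ _ "{..<n}"])
  finally show ?thesis unfolding quad_form_def .
qed

lemma trace_gram_eq_sum_sq:
  fixes R :: "'a \<Rightarrow> 'a \<Rightarrow> real"
  assumes "\<forall>a\<in>I. \<forall>b\<in>I. R a b = (\<Sum>i<n. vs i a * vs i b)"
  shows "(\<Sum>a\<in>I. R a a) = (\<Sum>i<n. \<Sum>a\<in>I. (vs i a)\<^sup>2)"
proof -
  have "(\<Sum>a\<in>I. R a a) = (\<Sum>a\<in>I. \<Sum>i<n. (vs i a)\<^sup>2)"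
    using assms by (simp add: power2_eq_square)
  then show ?thesis by (simp add: sum.swap[of _ I])
qed

lemma quad_form_add: "quad_form I (\<lambda>a b. A a b + B a b) v = quad_form I A v + quad_form I B v"
  unfolding quad_form_def by (simp add: algebra_simps sum.distrib)

lemma quad_form_scale: "quad_form I (\<lambda>a b. c * A a b) v = c * quad_form I A v"
  unfolding quad_form_def by (simp add: sum_distrib_left ac_simps)

lemma quad_form_diag:
  assumes "finite I"
  shows "quad_form I (\<lambda>a b. if a = b then d a else 0) v = (\<Sum>a\<in>I. d a * (v a)\<^sup>2)"
  unfolding quad_form_def
proof (rule sum.cong[OF refl])
  fix a assume "a \<in> I"
  have "(\<Sum>b\<in>I. v a * (if a = b then d a else 0) * v b) = (\<Sum>b\<in>I. if b = a then d a * (v a)\<^sup>2 else 0)"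
    by (rule sum.cong) (auto simp: power2_eq_square)
  with assms \<open>a \<in> I\<close> show "(\<Sum>b\<in>I. v a * (if a = b then d a else 0) * v b) = d a * (v a)\<^sup>2"
    by simp
qed

lemma quad_form_gram:
  "quad_form I (\<lambda>a b. \<Sum>m\<in>M. f m a * f m b) v = (\<Sum>m\<in>M. (\<Sum>a\<in>I. f m a * v a)\<^sup>2)"
proof -
  have "quad_form I (\<lambda>a b. \<Sum>m\<in>M. f m a * f m b) v = (\<Sum>a\<in>I. \<Sum>b\<in>I. \<Sum>m\<in>M. (f m a * v a) * (f m b * v b))"
    unfolding quad_form_def by (simp add: sum_distrib_left sum_distrib_right ac_simps)
  also have "\<dots> = (\<Sum>m\<in>M. \<Sum>a\<in>I. \<Sum>b\<in>I. (f m a * v a) * (f m b * v b))"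
    by (subst sum.swap) (rule sum.cong[OF refl], rule sum.swap)
  finally show ?thesis by (simp add: power2_eq_square sum_product)
qed


definition dot :: "nat \<Rightarrow> (nat \<Rightarrow> real) \<Rightarrow> (nat \<Rightarrow> real) \<Rightarrow> real" where
  "dot k x y = (\<Sum>r\<le>k. x r * y r)"

lemma dot_commute: "dot k x y = dot k y x"
  unfolding dot_def by (simp add: mult.commute)

lemma dot_add_left: "dot k (\<lambda>r. x r + y r) z = dot k x z + dot k y z"
  unfolding dot_def by (simp add: distrib_right sum.distrib)

lemma dot_diff_left: "dot k (\<lambda>r. x r - y r) z = dot k x z - dot k y z"
  unfolding dot_def by (simp add: left_diff_distrib sum_subtractf)

lemma dot_scale_left: "dot k (\<lambda>r. c * x r) z = c * dot k x z"
  unfolding dot_def by (simp add: sum_distrib_left mult.assoc)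

lemma dot_add_right: "dot k z (\<lambda>r. x r + y r) = dot k z x + dot k z y"
  by (simp add: dot_commute[of k z] dot_add_left)

lemma dot_diff_right: "dot k z (\<lambda>r. x r - y r) = dot k z x - dot k z y"
  by (simp add: dot_commute[of k z] dot_diff_left)

lemma dot_scale_right: "dot k z (\<lambda>r. c * x r) = c * dot k z x"
  by (simp add: dot_commute[of k z] dot_scale_left)

lemma dot_indicator_left:
  assumes "j \<le> k"
  shows "dot k (\<lambda>r. if r = j then 1 else 0) x = x j"
proof -
  have "dot k (\<lambda>r. if r = j then 1 else 0) x = (\<Sum>r\<le>k. if r = j then x j else 0)"
    unfolding dot_def by (intro sum.cong) auto
  with assms show ?thesis by simp
qed

lemma dot_self_nonneg: "0 \<le> dot k x x"
  unfolding dot_def by (simp add: sum_nonneg)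

lemma dot_bessel: "2 * dot k x y - dot k y y \<le> dot k x x"
proof -
  have "0 \<le> dot k (\<lambda>r. x r - y r) (\<lambda>r. x r - y r)" by (rule dot_self_nonneg)
  then show ?thesis
    by (simp add: dot_diff_left dot_commute[of k _ "\<lambda>r. x r - y r"] dot_commute[of k y x])
qed

lemma binary_quadratic_form_nonneg:
  fixes P R K a b :: real
  assumes "0 \<le> P" "0 \<le> R" "K\<^sup>2 \<le> P * R"
  shows "0 \<le> P * a\<^sup>2 - 2 * K * a * b + R * b\<^sup>2"
proof (cases "P = 0")
  case True
  with assms show ?thesis by simp
next
  case False
  have "P * (P * a\<^sup>2 - 2 * K * a * b + R * b\<^sup>2) = (P * a - K * b)\<^sup>2 + (P * R - K\<^sup>2) * b\<^sup>2"
    by (simp add: algebra_simps power2_eq_square)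
  also have "\<dots> \<ge> 0" using assms by simp
  finally show ?thesis using False assms(1) by (simp add: zero_le_mult_iff)
qed

text \<open>The largest eigenvalue of p a a^T + (1 - p) b b^T for unit vectors a, b with a \<bullet> b = c.\<close>
definition top_eig_two_lines :: "real \<Rightarrow> real \<Rightarrow> real" where
  "top_eig_two_lines p c = 1/2 + 1/2 * sqrt (1 - 4 * p * (1 - p) * (1 - c\<^sup>2))"

lemma two_lines_ineq:
  fixes p c \<mu> A B :: real
  assumes p: "0 \<le> p" "p \<le> 1" and c: "c\<^sup>2 \<le> 1" and \<mu>: "top_eig_two_lines p c \<le> \<mu>"
  shows "(1 - c\<^sup>2) * (p * A\<^sup>2 + (1 - p) * B\<^sup>2) \<le> \<mu> * (A\<^sup>2 + B\<^sup>2 - 2 * c * A * B)"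
proof -
  define s where "s = p * (1 - p) * (1 - c\<^sup>2)"
  have "s \<le> p * (1 - p)"
    unfolding s_def using p c by (simp add: mult_left_le zero_le_power2)
  then have "(2 * p - 1)\<^sup>2 \<le> 1 - 4 * s"
    by (simp add: power2_eq_square algebra_simps)
  then have sqrt_ge: "\<bar>2 * p - 1\<bar> \<le> sqrt (1 - 4 * s)"
    using real_sqrt_le_mono[OF \<open>(2 * p - 1)\<^sup>2 \<le> 1 - 4 * s\<close>] by simp
  have \<mu>_ge: "1/2 + 1/2 * sqrt (1 - 4 * s) \<le> \<mu>"
    using \<mu> unfolding top_eig_two_lines_def s_def by (simp add: algebra_simps)
  then have "sqrt (1 - 4 * s) \<le> 2 * \<mu> - 1" by simp
  moreover have "0 \<le> 1 - 4 * s"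
    using \<open>(2 * p - 1)\<^sup>2 \<le> 1 - 4 * s\<close> zero_le_power2[of "2 * p - 1"] by linarith
  ultimately have "1 - 4 * s \<le> (2 * \<mu> - 1)\<^sup>2"
    using power_mono[of "sqrt (1 - 4 * s)" "2 * \<mu> - 1" 2] by simp
  then have det: "0 \<le> \<mu>\<^sup>2 - \<mu> + s"
    by (simp add: power2_eq_square algebra_simps)
  have "max p (1 - p) \<le> \<mu>" using \<mu>_ge sqrt_ge by linarith
  moreover have "0 \<le> c\<^sup>2 * p" "0 \<le> c\<^sup>2 * (1 - p)" using p by simp_all
  ultimately have P: "0 \<le> \<mu> - (1 - c\<^sup>2) * p" and R: "0 \<le> \<mu> - (1 - c\<^sup>2) * (1 - p)"
    by (simp_all add: algebra_simps)
  have "(\<mu> * c)\<^sup>2 \<le> (\<mu> - (1 - c\<^sup>2) * p) * (\<mu> - (1 - c\<^sup>2) * (1 - p))"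
  proof -
    have "(\<mu> - (1 - c\<^sup>2) * p) * (\<mu> - (1 - c\<^sup>2) * (1 - p)) - (\<mu> * c)\<^sup>2 = (1 - c\<^sup>2) * (\<mu>\<^sup>2 - \<mu> + s)"
      unfolding s_def by (simp add: power2_eq_square algebra_simps)
    also have "\<dots> \<ge> 0" using det c by simp
    finally show ?thesis by simp
  qed
  from binary_quadratic_form_nonneg[OF P R this, of A B] show ?thesis
    by (simp add: algebra_simps power2_eq_square)
qed

text \<open>The witness (\<alpha>, \<beta>) is the coordinate vector, in the basis a, b, of the orthogonal projection
  onto span {a, b} of any x with a \<bullet> x = A and b \<bullet> x = B.\<close>
lemma two_lines_bessel_witness:
  fixes p c \<mu> A B :: real
  assumes p: "0 \<le> p" "p \<le> 1" and c: "c\<^sup>2 < 1" and \<mu>: "top_eig_two_lines p c \<le> \<mu>"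
  shows "\<exists>\<alpha> \<beta>. p * A\<^sup>2 + (1 - p) * B\<^sup>2 \<le> \<mu> * (2 * (\<alpha> * A + \<beta> * B) - (\<alpha>\<^sup>2 + \<beta>\<^sup>2 + 2 * c * \<alpha> * \<beta>))"
proof (intro exI)
  define d where "d = 1 - c\<^sup>2"
  have d: "0 < d" using c unfolding d_def by simp
  define \<alpha> where "\<alpha> = (A - c * B) / d"
  define \<beta> where "\<beta> = (B - c * A) / d"
  have d\<alpha>: "d * \<alpha> = A - c * B" and d\<beta>: "d * \<beta> = B - c * A"
    using d unfolding \<alpha>_def \<beta>_def by simp_all
  have "d * (\<alpha> + c * \<beta>) = d * A" "d * (c * \<alpha> + \<beta>) = d * B"
    unfolding distrib_left mult.left_commute[of d c] d\<alpha> d\<beta>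
    by (simp_all add: d_def power2_eq_square algebra_simps)
  then have "\<alpha> + c * \<beta> = A" "c * \<alpha> + \<beta> = B"
    using d by simp_all
  then have "\<alpha>\<^sup>2 + \<beta>\<^sup>2 + 2 * c * \<alpha> * \<beta> = \<alpha> * A + \<beta> * B"
    by (auto simp: power2_eq_square algebra_simps)
  then have "2 * (\<alpha> * A + \<beta> * B) - (\<alpha>\<^sup>2 + \<beta>\<^sup>2 + 2 * c * \<alpha> * \<beta>) = \<alpha> * A + \<beta> * B"
    by simp
  also have "\<dots> = (A\<^sup>2 + B\<^sup>2 - 2 * c * A * B) / d"
    using d unfolding \<alpha>_def \<beta>_def by (simp add: field_simps power2_eq_square)
  finally have witness_value: "2 * (\<alpha> * A + \<beta> * B) - (\<alpha>\<^sup>2 + \<beta>\<^sup>2 + 2 * c * \<alpha> * \<beta>)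
      = (A\<^sup>2 + B\<^sup>2 - 2 * c * A * B) / d" .
  have "d * (p * A\<^sup>2 + (1 - p) * B\<^sup>2) \<le> \<mu> * (A\<^sup>2 + B\<^sup>2 - 2 * c * A * B)"
    unfolding d_def using two_lines_ineq[OF p _ \<mu>] c by simp
  then show "p * A\<^sup>2 + (1 - p) * B\<^sup>2
      \<le> \<mu> * (2 * (\<alpha> * A + \<beta> * B) - (\<alpha>\<^sup>2 + \<beta>\<^sup>2 + 2 * c * \<alpha> * \<beta>))"
    unfolding witness_value using d by (simp add: pos_le_divide_eq mult.commute)
qed

lemma top_eig_two_lines_ge_half:
  assumes "0 \<le> p" "p \<le> 1" "c\<^sup>2 \<le> 1"
  shows "1/2 \<le> top_eig_two_lines p c"
proof -
  have "4 * p * (1 - p) * (1 - c\<^sup>2) \<le> 4 * p * (1 - p)"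
    using assms by (intro mult_left_le) simp_all
  also have "\<dots> \<le> 1" using zero_le_power2[of "2 * p - 1"] by (simp add: power2_eq_square algebra_simps)
  finally show ?thesis unfolding top_eig_two_lines_def by simp
qed

lemma top_eig_two_lines_mono:
  assumes "0 \<le> p" "p \<le> 1" "c\<^sup>2 \<le> c'\<^sup>2"
  shows "top_eig_two_lines p c \<le> top_eig_two_lines p c'"
proof -
  have "4 * p * (1 - p) * (1 - c'\<^sup>2) \<le> 4 * p * (1 - p) * (1 - c\<^sup>2)"
    using assms by (intro mult_left_mono) simp_all
  then show ?thesis unfolding top_eig_two_lines_def by simp
qed

lemma two_planes_bound:
  fixes a1 b1 a2 b2 x :: "nat \<Rightarrow> real"
  assumes p: "0 \<le> p" "p \<le> 1"
    and unit: "dot k a1 a1 = 1" "dot k b1 b1 = 1" "dot k a2 a2 = 1" "dot k b2 b2 = 1"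
    and angle: "dot k a1 b1 = c1" "dot k a2 b2 = c2"
    and orth: "dot k a1 a2 = 0" "dot k a1 b2 = 0" "dot k b1 a2 = 0" "dot k b1 b2 = 0"
    and c: "c1\<^sup>2 < 1" "c2\<^sup>2 < 1"
    and \<mu>: "top_eig_two_lines p c1 \<le> \<mu>" "top_eig_two_lines p c2 \<le> \<mu>"
  shows "p * ((dot k a1 x)\<^sup>2 + (dot k a2 x)\<^sup>2) + (1 - p) * ((dot k b1 x)\<^sup>2 + (dot k b2 x)\<^sup>2)
    \<le> \<mu> * dot k x x"
proof -
  define g where "g c \<alpha> \<beta> A B = 2 * (\<alpha> * A + \<beta> * B) - (\<alpha>\<^sup>2 + \<beta>\<^sup>2 + 2 * c * \<alpha> * \<beta>)"
    for c \<alpha> \<beta> A B :: real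
  obtain \<alpha>1 \<beta>1 where 1: "p * (dot k a1 x)\<^sup>2 + (1 - p) * (dot k b1 x)\<^sup>2
      \<le> \<mu> * g c1 \<alpha>1 \<beta>1 (dot k a1 x) (dot k b1 x)"
    using two_lines_bessel_witness[OF p c(1) \<mu>(1)] unfolding g_def by blast
  obtain \<alpha>2 \<beta>2 where 2: "p * (dot k a2 x)\<^sup>2 + (1 - p) * (dot k b2 x)\<^sup>2
      \<le> \<mu> * g c2 \<alpha>2 \<beta>2 (dot k a2 x) (dot k b2 x)"
    using two_lines_bessel_witness[OF p c(2) \<mu>(2)] unfolding g_def by blast
  define y where "y r = \<alpha>1 * a1 r + \<beta>1 * b1 r + \<alpha>2 * a2 r + \<beta>2 * b2 r" for r
  have "dot k x y = \<alpha>1 * dot k a1 x + \<beta>1 * dot k b1 x + \<alpha>2 * dot k a2 x + \<beta>2 * dot k b2 x"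
    unfolding y_def by (simp add: dot_add_right dot_scale_right dot_commute[of k x])
  moreover have "dot k y y = (\<alpha>1\<^sup>2 + \<beta>1\<^sup>2 + 2 * c1 * \<alpha>1 * \<beta>1) + (\<alpha>2\<^sup>2 + \<beta>2\<^sup>2 + 2 * c2 * \<alpha>2 * \<beta>2)"
    unfolding y_def using unit angle orth
    by (simp add: dot_add_left dot_add_right dot_scale_left dot_scale_right dot_commute[of k b1 a1]
        dot_commute[of k b2 a2] dot_commute[of k a2 a1] dot_commute[of k b2 a1] dot_commute[of k a2 b1]
        dot_commute[of k b2 b1] power2_eq_square algebra_simps)
  ultimately have "g c1 \<alpha>1 \<beta>1 (dot k a1 x) (dot k b1 x) + g c2 \<alpha>2 \<beta>2 (dot k a2 x) (dot k b2 x)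
      \<le> dot k x x"
    using dot_bessel[of k x y] unfolding g_def by simp
  then have "\<mu> * (g c1 \<alpha>1 \<beta>1 (dot k a1 x) (dot k b1 x) + g c2 \<alpha>2 \<beta>2 (dot k a2 x) (dot k b2 x))
      \<le> \<mu> * dot k x x"
    using top_eig_two_lines_ge_half[OF p, of c1] c(1) \<mu>(1) by (intro mult_left_mono) simp_all
  with 1 2 show ?thesis by (simp add: algebra_simps)
qed

lemma coeff_linear_poly_power_all:
  fixes a b :: "'a :: comm_semiring_1"
  shows "coeff ([:a, b:] ^ n) i = of_nat (n choose i) * b ^ i * a ^ (n - i)"
proof (cases "i \<le> n")
  case True
  then show ?thesis by (rule coeff_linear_poly_power)
next
  case False
  have "degree ([:a, b:] ^ n) \<le> n"
    by (rule order.trans[OF degree_power_le]) auto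
  with False show ?thesis by (simp add: coeff_eq_0 binomial_eq_0)
qed

definition da_poly :: "nat \<Rightarrow> nat \<Rightarrow> real poly" where
  "da_poly k m = [:1, 1:] ^ m * [:-1, 1:] ^ (k - m)"

lemma poly_da_poly: "poly (da_poly k m) x = (1 + x) ^ m * (x - 1) ^ (k - m)"
  by (simp add: da_poly_def algebra_simps)

lemma da_amp_eq_coeff:
  "da_amp k m r = 1 / sqrt (2 ^ k) * sqrt (fact r * fact (k - r) / (fact m * fact (k - m)))
     * coeff (da_poly k m) r"
proof -
  have "coeff (da_poly k m) r = (\<Sum>j\<le>r. real (m choose j) * real ((k - m) choose (r - j)) *
                      (-1) ^ ((k - m) - (r - j)))"
    unfolding da_poly_def coeff_mult coeff_linear_poly_power_all by (simp add: mult.assoc)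
  also have "\<dots> = (\<Sum>j\<le>min m r. real (m choose j) * real ((k - m) choose (r - j)) *
                      (-1) ^ ((k - m) - (r - j)))"
    by (rule sum.mono_neutral_right) auto
  finally show ?thesis unfolding da_amp_def by simp
qed

text \<open>Compare coefficients of x^s y^r in
  (\<Sum>m\<le>k. (k choose m) * ((1+x)(1+y))^m * ((x-1)(y-1))^(k-m)) = (2 + 2 x y)^k.\<close>
lemma sum_binomial_coeff_da_poly:
  assumes "r \<le> k" "s \<le> k"
  shows "(\<Sum>m\<le>k. real (k choose m) * coeff (da_poly k m) r * coeff (da_poly k m) s)
         = (if r = s then 2 ^ k * real (k choose r) else 0)"
proof -
  have gen: "(\<Sum>m\<le>k. smult (real (k choose m) * poly (da_poly k m) x) (da_poly k m)) = [:2, 2 * x:] ^ k"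
    for x
  proof (rule poly_eq_poly_eq_iff[THEN iffD1], rule ext)
    fix y
    have "poly (\<Sum>m\<le>k. smult (real (k choose m) * poly (da_poly k m) x) (da_poly k m)) y
        = (\<Sum>m\<le>k. real (k choose m) * ((1 + x) * (1 + y)) ^ m * ((x - 1) * (y - 1)) ^ (k - m))"
      by (simp add: poly_sum poly_da_poly power_mult_distrib mult_ac)
    also have "\<dots> = ((1 + x) * (1 + y) + (x - 1) * (y - 1)) ^ k"
      by (simp add: binomial_ring mult_ac)
    also have "\<dots> = poly ([:2, 2 * x:] ^ k) y"
      by (simp add: algebra_simps)
    finally show "poly (\<Sum>m\<le>k. smult (real (k choose m) * poly (da_poly k m) x) (da_poly k m)) y
        = poly ([:2, 2 * x:] ^ k) y" .
  qed
  have "(\<Sum>m\<le>k. smult (real (k choose m) * coeff (da_poly k m) s) (da_poly k m))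
      = monom (2 ^ k * real (k choose s)) s"
  proof (rule poly_eq_poly_eq_iff[THEN iffD1], rule ext)
    fix x
    have "poly (\<Sum>m\<le>k. smult (real (k choose m) * coeff (da_poly k m) s) (da_poly k m)) x
        = coeff (\<Sum>m\<le>k. smult (real (k choose m) * poly (da_poly k m) x) (da_poly k m)) s"
      by (simp add: poly_sum coeff_sum mult_ac)
    also have "\<dots> = poly (monom (2 ^ k * real (k choose s)) s) x"
      unfolding gen coeff_linear_poly_power_all
      using assms by (simp add: poly_monom power_mult_distrib power_add[symmetric])
    finally show "poly (\<Sum>m\<le>k. smult (real (k choose m) * coeff (da_poly k m) s) (da_poly k m)) x
        = poly (monom (2 ^ k * real (k choose s)) s) x" .
  qed
  then have "coeff (\<Sum>m\<le>k. smult (real (k choose m) * coeff (da_poly k m) s) (da_poly k m)) r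
      = coeff (monom (2 ^ k * real (k choose s)) s) r"
    by simp
  then show ?thesis by (simp add: coeff_sum mult_ac)
qed

lemma da_amp_orthonormal:
  assumes "r \<le> k" "s \<le> k"
  shows "(\<Sum>m\<le>k. da_amp k m r * da_amp k m s) = (if r = s then 1 else 0)"
proof -
  define fr where "fr = (fact r * fact (k - r) :: real)"
  define fs where "fs = (fact s * fact (k - s) :: real)"
  have pos: "fr > 0" "fs > 0" unfolding fr_def fs_def by auto
  have summand: "da_amp k m r * da_amp k m s = 1 / 2 ^ k * (sqrt (fr * fs) / fact k) *
      (real (k choose m) * coeff (da_poly k m) r * coeff (da_poly k m) s)" if "m \<le> k" for m
  proof -
    have fm: "(fact m * fact (k - m) :: real) > 0" by auto
    have "sqrt (fr / (fact m * fact (k - m))) * sqrt (fs / (fact m * fact (k - m)))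
        = sqrt (fr * fs) / (fact m * fact (k - m))"
      using fm pos by (simp add: real_sqrt_mult[symmetric] real_sqrt_divide power2_eq_square[symmetric])
    also have "\<dots> = sqrt (fr * fs) / fact k * real (k choose m)"
      using fm by (simp add: binomial_fact[OF that])
    finally show ?thesis
      unfolding da_amp_eq_coeff fr_def[symmetric] fs_def[symmetric]
      by (simp add: real_sqrt_mult[symmetric] algebra_simps)
  qed
  have "(\<Sum>m\<le>k. da_amp k m r * da_amp k m s) = 1 / 2 ^ k * (sqrt (fr * fs) / fact k) *
      (\<Sum>m\<le>k. real (k choose m) * coeff (da_poly k m) r * coeff (da_poly k m) s)"
    by (simp add: summand sum_distrib_left)
  also have "\<dots> = (if r = s then 1 else 0)"
  proof (cases "r = s")
    case True
    have "real (k choose r) = fact k / fr" using binomial_fact[OF assms(1)] by (simp add: fr_def)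
    moreover have "sqrt (fr * fs) = fr" using True pos by (simp add: fr_def fs_def power2_eq_square[symmetric])
    ultimately show ?thesis
      unfolding sum_binomial_coeff_da_poly[OF assms] using True pos by simp
  qed (simp add: sum_binomial_coeff_da_poly[OF assms])
  finally show ?thesis .
qed

lemma sqrt_fact_ratio_mult_binomial:
  assumes "r \<le> k"
  shows "sqrt (fact r * fact (k - r) / fact k) * real (k choose r) = sqrt (real (k choose r))"
proof -
  have b: "real (k choose r) = fact k / (fact r * fact (k - r))" using binomial_fact[OF assms] by simp
  have pos: "real (k choose r) > 0" using assms by simp
  have "sqrt (fact r * fact (k - r) / fact k) = 1 / sqrt (real (k choose r))"
    unfolding b by (simp add: real_sqrt_divide)
  with pos show ?thesis by (simp add: real_div_sqrt)
qed

lemma da_amp_0: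
  assumes "r \<le> k"
  shows "da_amp k 0 r = (-1) ^ (k - r) * sqrt (real (k choose r) / 2 ^ k)"
proof -
  have "da_amp k 0 r
      = 1 / sqrt (2 ^ k) * (sqrt (fact r * fact (k - r) / fact k) * real (k choose r)) * (-1) ^ (k - r)"
    by (simp add: da_amp_eq_coeff da_poly_def coeff_linear_poly_power_all)
  then show ?thesis
    unfolding sqrt_fact_ratio_mult_binomial[OF assms] by (simp add: real_sqrt_divide)
qed

lemma da_amp_self:
  assumes "r \<le> k"
  shows "da_amp k k r = sqrt (real (k choose r) / 2 ^ k)"
proof -
  have "da_amp k k r = 1 / sqrt (2 ^ k) * (sqrt (fact r * fact (k - r) / fact k) * real (k choose r))"
    by (simp add: da_amp_eq_coeff da_poly_def coeff_linear_poly_power_all)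
  then show ?thesis
    unfolding sqrt_fact_ratio_mult_binomial[OF assms] by (simp add: real_sqrt_divide)
qed

lemma sum_binomial_div_two_pow: "(\<Sum>r\<le>k. real (k choose r) / 2 ^ k) = 1"
  by (simp add: sum_divide_distrib[symmetric] choose_row_sum[of k, symmetric]
      of_nat_sum[symmetric] del: of_nat_sum)

lemma dot_da_amp_0_0: "dot k (da_amp k 0) (da_amp k 0) = 1"
proof -
  have "da_amp k 0 r * da_amp k 0 r = real (k choose r) / 2 ^ k" if "r \<le> k" for r
  proof -
    have "da_amp k 0 r * da_amp k 0 r = ((-1) ^ (k - r) * (-1) ^ (k - r))
        * (sqrt (real (k choose r) / 2 ^ k) * sqrt (real (k choose r) / 2 ^ k))"
      using that by (simp add: da_amp_0 ac_simps)
    then show ?thesis by (simp flip: power_add)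
  qed
  then show ?thesis unfolding dot_def by (simp add: sum_binomial_div_two_pow)
qed

lemma dot_da_amp_self_self: "dot k (da_amp k k) (da_amp k k) = 1"
  unfolding dot_def by (simp add: da_amp_self sum_binomial_div_two_pow)

lemma dot_da_amp_0_self:
  assumes "1 \<le> k"
  shows "dot k (da_amp k 0) (da_amp k k) = 0"
proof -
  have "dot k (da_amp k 0) (da_amp k k) = (\<Sum>r\<le>k. real (k choose r) * 1 ^ r * (-1) ^ (k - r)) / 2 ^ k"
    unfolding dot_def sum_divide_distrib
    by (intro sum.cong refl) (simp add: da_amp_0 da_amp_self mult_ac)
  also have "\<dots> = (1 + (-1)) ^ k / 2 ^ k"
    by (simp only: binomial_ring)
  finally show ?thesis using assms by simp
qed

lemma sum_sq_dot_da_amp: "(\<Sum>m\<le>k. (dot k (da_amp k m) x)\<^sup>2) = dot k x x"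
proof -
  have "(\<Sum>m\<le>k. (dot k (da_amp k m) x)\<^sup>2)
      = (\<Sum>m\<le>k. \<Sum>r\<le>k. \<Sum>s\<le>k. x r * x s * (da_amp k m r * da_amp k m s))"
    unfolding dot_def power2_eq_square sum_product by (simp add: ac_simps)
  also have "\<dots> = (\<Sum>r\<le>k. \<Sum>s\<le>k. x r * x s * (\<Sum>m\<le>k. da_amp k m r * da_amp k m s))"
    unfolding sum_distrib_left
    by (subst sum.swap) (rule sum.cong[OF refl], rule sum.swap)
  also have "\<dots> = (\<Sum>r\<le>k. \<Sum>s\<le>k. if s = r then x r * x r else 0)"
    by (intro sum.cong refl) (auto simp: da_amp_orthonormal)
  finally show ?thesis unfolding dot_def by simp
qed

text \<open>span {e0, ek, u, v} splits into the orthogonal planes span {e0, (v - u)/\<surd>2} and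
  span {ek, (v + u)/\<surd>2}, both with angle cosine \<surd>2 t.\<close>
lemma mixed_projection_bound_signed_overlaps:
  fixes e0 ek u v x :: "nat \<Rightarrow> real"
  assumes p: "0 \<le> p" "p \<le> 1"
    and gram: "dot k e0 e0 = 1" "dot k ek ek = 1" "dot k u u = 1" "dot k v v = 1"
      "dot k e0 ek = 0" "dot k u v = 0"
      "dot k e0 u = - t" "dot k ek u = t" "dot k e0 v = t" "dot k ek v = t"
    and t: "2 * t\<^sup>2 < 1"
  shows "p * ((dot k e0 x)\<^sup>2 + (dot k ek x)\<^sup>2) + (1 - p) * ((dot k u x)\<^sup>2 + (dot k v x)\<^sup>2)
    \<le> top_eig_two_lines p (sqrt 2 * t) * dot k x x"
proof -
  define s where "s = 1 / sqrt (2 :: real)"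
  have s: "s * s = 1 / 2" "2 * s = sqrt 2" unfolding s_def by (simp_all add: real_div_sqrt)
  define b1 where "b1 r = s * v r - s * u r" for r
  define b2 where "b2 r = s * v r + s * u r" for r
  note bilinear = dot_diff_left dot_diff_right dot_add_left dot_add_right dot_scale_left dot_scale_right
  note gram' = gram dot_commute[of k ek e0] dot_commute[of k v u] dot_commute[of k u e0]
    dot_commute[of k u ek] dot_commute[of k v e0] dot_commute[of k v ek]
  have b: "dot k b1 b1 = 1" "dot k b2 b2 = 1" "dot k e0 b1 = sqrt 2 * t" "dot k ek b2 = sqrt 2 * t"
    "dot k e0 b2 = 0" "dot k b1 ek = 0" "dot k b1 b2 = 0"
    unfolding b1_def b2_def using s by (simp_all add: bilinear gram')
  have c: "(sqrt 2 * t)\<^sup>2 < 1" using t by (simp add: power_mult_distrib)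
  have "p * ((dot k e0 x)\<^sup>2 + (dot k ek x)\<^sup>2) + (1 - p) * ((dot k b1 x)\<^sup>2 + (dot k b2 x)\<^sup>2)
      \<le> top_eig_two_lines p (sqrt 2 * t) * dot k x x"
    by (rule two_planes_bound[OF p gram(1) b(1) gram(2) b(2) b(3) b(4) gram(5) b(5) b(6) b(7) c c
          order_refl order_refl])
  moreover have "(dot k b1 x)\<^sup>2 + (dot k b2 x)\<^sup>2 = 2 * (s * s) * ((dot k u x)\<^sup>2 + (dot k v x)\<^sup>2)"
    unfolding b1_def b2_def by (simp add: bilinear power2_eq_square algebra_simps)
  ultimately show ?thesis using s by simp
qed

text \<open>span {e0, ek, u, v} splits into the orthogonal planes span {(e0 + ek)/\<surd>2, (u + v)/\<surd>2},
  with angle cosine 2 t, and span {(e0 - ek)/\<surd>2, (u - v)/\<surd>2}, whose lines are orthogonal.\<close>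
lemma mixed_projection_bound_equal_overlaps:
  fixes e0 ek u v x :: "nat \<Rightarrow> real"
  assumes p: "0 \<le> p" "p \<le> 1"
    and gram: "dot k e0 e0 = 1" "dot k ek ek = 1" "dot k u u = 1" "dot k v v = 1"
      "dot k e0 ek = 0" "dot k u v = 0"
      "dot k e0 u = t" "dot k ek u = t" "dot k e0 v = t" "dot k ek v = t"
    and t: "4 * t\<^sup>2 < 1"
  shows "p * ((dot k e0 x)\<^sup>2 + (dot k ek x)\<^sup>2) + (1 - p) * ((dot k u x)\<^sup>2 + (dot k v x)\<^sup>2)
    \<le> top_eig_two_lines p (2 * t) * dot k x x"
proof -
  define s where "s = 1 / sqrt (2 :: real)"
  have s: "s * s = 1 / 2" unfolding s_def by simp
  define a1 where "a1 r = s * e0 r + s * ek r" for r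
  define a2 where "a2 r = s * e0 r - s * ek r" for r
  define b1 where "b1 r = s * u r + s * v r" for r
  define b2 where "b2 r = s * u r - s * v r" for r
  note bilinear = dot_diff_left dot_diff_right dot_add_left dot_add_right dot_scale_left dot_scale_right
  note gram' = gram dot_commute[of k ek e0] dot_commute[of k v u] dot_commute[of k u e0]
    dot_commute[of k u ek] dot_commute[of k v e0] dot_commute[of k v ek]
  have ab: "dot k a1 a1 = 1" "dot k b1 b1 = 1" "dot k a2 a2 = 1" "dot k b2 b2 = 1"
    "dot k a1 b1 = 2 * t" "dot k a2 b2 = 0"
    "dot k a1 a2 = 0" "dot k a1 b2 = 0" "dot k b1 a2 = 0" "dot k b1 b2 = 0"
    unfolding a1_def a2_def b1_def b2_def using s by (simp_all add: bilinear gram')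
  have c: "(2 * t)\<^sup>2 < 1" "(0::real)\<^sup>2 < 1" using t by (simp_all add: power_mult_distrib)
  have "top_eig_two_lines p 0 \<le> top_eig_two_lines p (2 * t)"
    using p by (intro top_eig_two_lines_mono) simp_all
  then have "p * ((dot k a1 x)\<^sup>2 + (dot k a2 x)\<^sup>2) + (1 - p) * ((dot k b1 x)\<^sup>2 + (dot k b2 x)\<^sup>2)
      \<le> top_eig_two_lines p (2 * t) * dot k x x"
    by (rule two_planes_bound[OF p ab c order_refl])
  moreover have "(dot k a1 x)\<^sup>2 + (dot k a2 x)\<^sup>2 = 2 * (s * s) * ((dot k e0 x)\<^sup>2 + (dot k ek x)\<^sup>2)"
    "(dot k b1 x)\<^sup>2 + (dot k b2 x)\<^sup>2 = 2 * (s * s) * ((dot k u x)\<^sup>2 + (dot k v x)\<^sup>2)"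
    unfolding a1_def a2_def b1_def b2_def by (simp_all add: bilinear power2_eq_square algebra_simps)
  ultimately show ?thesis using s by simp
qed

text \<open>The quadratic form of P_DC on the k-photon block, x r being the coefficient of |r, k-r>.\<close>
definition detector_form :: "real \<Rightarrow> nat \<Rightarrow> (nat \<Rightarrow> real) \<Rightarrow> real" where
  "detector_form pz k x = pz * (\<Sum>r\<in>{1..k-1}. (x r)\<^sup>2)
     + (1 - pz) * (\<Sum>m\<in>{1..k-1}. (dot k (da_amp k m) x)\<^sup>2)"

lemma detector_form_nonneg: "0 \<le> pz \<Longrightarrow> pz \<le> 1 \<Longrightarrow> 0 \<le> detector_form pz k x"
  unfolding detector_form_def by (simp add: sum_nonneg)

lemma detector_form_le_dot:
  assumes "0 \<le> pz" "pz \<le> 1"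
  shows "detector_form pz k x \<le> dot k x x"
proof -
  have "(\<Sum>r\<in>{1..k-1}. (x r)\<^sup>2) \<le> dot k x x"
    unfolding dot_def power2_eq_square by (rule sum_mono2) auto
  moreover have "(\<Sum>m\<in>{1..k-1}. (dot k (da_amp k m) x)\<^sup>2) \<le> (\<Sum>m\<le>k. (dot k (da_amp k m) x)\<^sup>2)"
    by (rule sum_mono2) auto
  ultimately have "detector_form pz k x \<le> pz * dot k x x + (1 - pz) * dot k x x"
    unfolding detector_form_def sum_sq_dot_da_amp using assms by (intro add_mono mult_left_mono) simp_all
  then show ?thesis by (simp add: algebra_simps)
qed

lemma sum_atMost_split_ends:
  fixes k :: nat and f :: "nat \<Rightarrow> 'a :: comm_monoid_add"
  assumes "1 \<le> k"
  shows "(\<Sum>r\<le>k. f r) = f 0 + f k + (\<Sum>r\<in>{1..k-1}. f r)"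
proof -
  have "{..k} = insert 0 (insert k {1..k-1})" using assms by auto
  then show ?thesis using assms by (simp add: add.assoc)
qed

lemma detector_form_eq_complement:
  assumes "1 \<le> k"
  shows "detector_form pz k x = dot k x x - (pz * ((x 0)\<^sup>2 + (x k)\<^sup>2)
    + (1 - pz) * ((dot k (da_amp k 0) x)\<^sup>2 + (dot k (da_amp k k) x)\<^sup>2))"
proof -
  have hv: "(\<Sum>r\<in>{1..k-1}. (x r)\<^sup>2) = dot k x x - ((x 0)\<^sup>2 + (x k)\<^sup>2)"
    using sum_atMost_split_ends[OF assms, of "\<lambda>r. (x r)\<^sup>2"] by (simp add: dot_def power2_eq_square)
  have da: "(\<Sum>m\<in>{1..k-1}. (dot k (da_amp k m) x)\<^sup>2)
      = dot k x x - ((dot k (da_amp k 0) x)\<^sup>2 + (dot k (da_amp k k) x)\<^sup>2)"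
    using sum_atMost_split_ends[OF assms, of "\<lambda>m. (dot k (da_amp k m) x)\<^sup>2"]
    by (simp add: sum_sq_dot_da_amp)
  show ?thesis unfolding detector_form_def hv da by (simp add: algebra_simps)
qed

lemma lambda_min_odd:
  assumes "odd k"
  shows "lambda_min pz k = 1 - top_eig_two_lines pz (sqrt 2 * sqrt (1 / 2 ^ k))"
  using assms unfolding top_eig_two_lines_def lambda_min_def power_mult_distrib
  by (simp add: power_one_over power2_eq_square field_simps)

lemma lambda_min_even:
  assumes "even k"
  shows "lambda_min pz k = 1 - top_eig_two_lines pz (2 * sqrt (1 / 2 ^ k))"
  using assms unfolding top_eig_two_lines_def lambda_min_def power_mult_distrib
  by (simp add: power_one_over power2_eq_square field_simps)

lemma lambda_min_le_detector_form:
  assumes k: "3 \<le> k" and p: "0 \<le> pz" "pz \<le> 1"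
  shows "lambda_min pz k * dot k x x \<le> detector_form pz k x"
proof -
  define t where "t = sqrt (1 / 2 ^ k :: real)"
  have tt: "t\<^sup>2 = 1 / 2 ^ k" unfolding t_def by simp
  have pow: "(2::real) ^ 3 \<le> 2 ^ k" using k by (intro power_increasing) simp_all
  define e0 where "e0 r = (if r = 0 then 1 else 0 :: real)" for r :: nat
  define ek where "ek r = (if r = k then 1 else 0 :: real)" for r
  define u where "u = da_amp k 0"
  define v where "v = da_amp k k"
  have gram: "dot k e0 e0 = 1" "dot k ek ek = 1" "dot k u u = 1" "dot k v v = 1"
    "dot k e0 ek = 0" "dot k u v = 0"
    "dot k e0 u = (-1) ^ k * t" "dot k ek u = t" "dot k e0 v = t" "dot k ek v = t"
    using k unfolding e0_def ek_def u_def v_def t_def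
    by (simp_all add: dot_indicator_left dot_da_amp_0_0 dot_da_amp_self_self dot_da_amp_0_self
        da_amp_0 da_amp_self)
  have Q: "pz * ((x 0)\<^sup>2 + (x k)\<^sup>2) + (1 - pz) * ((dot k u x)\<^sup>2 + (dot k v x)\<^sup>2)
      \<le> (1 - lambda_min pz k) * dot k x x"
  proof (cases "odd k")
    case True
    have "2 * t\<^sup>2 < 1" using pow unfolding tt by simp
    from mixed_projection_bound_signed_overlaps[OF p gram(1-6) _ gram(8-10) this, of x] gram(7) True
    have "pz * ((x 0)\<^sup>2 + (x k)\<^sup>2) + (1 - pz) * ((dot k u x)\<^sup>2 + (dot k v x)\<^sup>2)
        \<le> top_eig_two_lines pz (sqrt 2 * t) * dot k x x"
      unfolding e0_def ek_def using k by (simp add: dot_indicator_left)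
    moreover have "top_eig_two_lines pz (sqrt 2 * t) = 1 - lambda_min pz k"
      unfolding lambda_min_odd[OF True] t_def by simp
    ultimately show ?thesis by simp
  next
    case False
    then have "4 \<le> k" using k by presburger
    then have "(2::real) ^ 4 \<le> 2 ^ k" by (intro power_increasing) simp_all
    then have "4 * t\<^sup>2 < 1" unfolding tt by simp
    from mixed_projection_bound_equal_overlaps[OF p gram(1-6) _ gram(8-10) this, of x] gram(7) False
    have "pz * ((x 0)\<^sup>2 + (x k)\<^sup>2) + (1 - pz) * ((dot k u x)\<^sup>2 + (dot k v x)\<^sup>2)
        \<le> top_eig_two_lines pz (2 * t) * dot k x x"
      unfolding e0_def ek_def using k by (simp add: dot_indicator_left)
    moreover have "top_eig_two_lines pz (2 * t) = 1 - lambda_min pz k"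
      using lambda_min_even[of k pz] False unfolding t_def by simp
    ultimately show ?thesis by simp
  qed
  then show ?thesis
    using detector_form_eq_complement[of k pz x] k unfolding u_def v_def by (simp add: algebra_simps)
qed

lemma lambda_min_le_Suc:
  assumes "0 \<le> pz" "pz \<le> 1"
  shows "lambda_min pz k \<le> lambda_min pz (Suc k)"
proof -
  define c where "c k = (if odd k then 8 else 16) * (1/2::real) ^ k" for k
  have lm: "lambda_min pz k = 1/2 - 1/2 * sqrt ((2 * pz - 1)\<^sup>2 + c k * (pz - pz\<^sup>2))" for k
    unfolding lambda_min_def c_def by simp
  have "c (Suc k) \<le> c k" unfolding c_def by auto
  moreover have "0 \<le> pz - pz\<^sup>2" using assms by (simp add: power2_eq_square mult_left_le_one_le)
  ultimately have "c (Suc k) * (pz - pz\<^sup>2) \<le> c k * (pz - pz\<^sup>2)" by (rule mult_right_mono)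
  then show ?thesis unfolding lm by simp
qed

lemma lambda_min_mono: "0 \<le> pz \<Longrightarrow> pz \<le> 1 \<Longrightarrow> j \<le> k \<Longrightarrow> lambda_min pz j \<le> lambda_min pz k"
  by (rule lift_Suc_mono_le[of "lambda_min pz"]) (simp_all add: lambda_min_le_Suc)

lemma lambda_min_1: "lambda_min pz 1 = 0"
  unfolding lambda_min_def by (simp add: power2_eq_square algebra_simps)

lemma lambda_min_2: "lambda_min pz 2 = 0"
  unfolding lambda_min_def by (simp add: power2_eq_square algebra_simps)

lemma fock_block_eq_image: "fock_block k = (\<lambda>r. (r, k - r)) ` {..k}"
  unfolding fock_block_def by (auto simp: image_iff)

lemma finite_fock_block: "finite (fock_block k)"
  unfolding fock_block_eq_image by simp

lemma sum_fock_block: "(\<Sum>a\<in>fock_block k. f a) = (\<Sum>r\<le>k. f (r, k - r))"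
  unfolding fock_block_eq_image by (subst sum.reindex) (auto simp: inj_on_def)

lemma P_DC_real: "P_DC pz a b = complex_of_real (Re (P_DC pz a b))"
  by (simp add: complex_eq_iff P_DC_def P_HV_def P_DA_def Let_def)

lemma Re_P_DC_block:
  assumes "a \<in> fock_block k" "b \<in> fock_block k"
  shows "Re (P_DC pz a b) = pz * (if a = b then of_bool (1 \<le> fst a \<and> 1 \<le> snd a) else 0)
     + (1 - pz) * (\<Sum>m\<in>{1..k-1}. da_amp k m (fst a) * da_amp k m (fst b))"
  using assms unfolding fock_block_def P_DC_def P_HV_def P_DA_def by (auto simp: Let_def)

lemma quad_form_P_DC_block:
  "quad_form (fock_block k) (\<lambda>a b. Re (P_DC pz a b)) v = detector_form pz k (\<lambda>r. v (r, k - r))"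
proof -
  have "quad_form (fock_block k) (\<lambda>a b. Re (P_DC pz a b)) v
      = quad_form (fock_block k) (\<lambda>a b. pz * (if a = b then of_bool (1 \<le> fst a \<and> 1 \<le> snd a) else 0)
          + (1 - pz) * (\<Sum>m\<in>{1..k-1}. da_amp k m (fst a) * da_amp k m (fst b))) v"
    by (rule quad_form_cong) (simp_all add: Re_P_DC_block)
  also have "\<dots> = pz * (\<Sum>a\<in>fock_block k. of_bool (1 \<le> fst a \<and> 1 \<le> snd a) * (v a)\<^sup>2)
        + (1 - pz) * (\<Sum>m\<in>{1..k-1}. (\<Sum>a\<in>fock_block k. da_amp k m (fst a) * v a)\<^sup>2)"
    by (simp add: quad_form_add quad_form_scale quad_form_diag quad_form_gram finite_fock_block)
  also have "\<dots> = detector_form pz k (\<lambda>r. v (r, k - r))"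
  proof -
    have "(\<Sum>r\<le>k. of_bool (1 \<le> r \<and> 1 \<le> k - r) * (v (r, k - r))\<^sup>2)
        = (\<Sum>r\<in>{1..k-1}. (v (r, k - r))\<^sup>2)"
      by (rule sum.mono_neutral_cong_right) auto
    then show ?thesis unfolding detector_form_def sum_fock_block dot_def by simp
  qed
  finally show ?thesis .
qed

lemma psd_on_Re_density_matrix:
  assumes "density_matrix \<rho>" "finite I"
  shows "psd_on I (\<lambda>a b. Re (\<rho> a b))"
  unfolding psd_on_def
proof (intro conjI allI ballI)
  fix a b
  have "\<rho> a b = cnj (\<rho> b a)"
    using assms(1) unfolding density_matrix_def by blast
  then show "Re (\<rho> a b) = Re (\<rho> b a)" by simp
next
  fix v
  have "\<And>F (w :: fock_idx \<Rightarrow> complex). finite F \<Longrightarrow>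
      0 \<le> Re (\<Sum>a\<in>F. \<Sum>b\<in>F. cnj (w a) * \<rho> a b * w b)"
    using assms(1) unfolding density_matrix_def by blast
  from this[of I "\<lambda>a. complex_of_real (v a)", OF assms(2)] show "0 \<le> quad_form I (\<lambda>a b. Re (\<rho> a b)) v"
    unfolding quad_form_def by (simp add: Re_sum)
qed

definition block_trace :: "fock_op \<Rightarrow> fock_op \<Rightarrow> nat \<Rightarrow> real" where
  "block_trace \<rho> P k = Re (\<Sum>a\<in>fock_block k. \<Sum>b\<in>fock_block k. \<rho> a b * P b a)"

definition block_weight :: "fock_op \<Rightarrow> nat \<Rightarrow> real" where
  "block_weight \<rho> k = (\<Sum>a\<in>fock_block k. Re (\<rho> a a))"

lemma tr_block_eq_infsum: "tr_block \<rho> P = (\<Sum>\<^sub>\<infinity>k. block_trace \<rho> P k)"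
  unfolding tr_block_def block_trace_def ..

lemma block_trace_P_DC_gram:
  assumes "density_matrix \<rho>"
  obtains n :: nat and xs where
    "block_trace \<rho> (P_DC pz) k = (\<Sum>i<n. detector_form pz k (xs i))"
    "block_weight \<rho> k = (\<Sum>i<n. dot k (xs i) (xs i))"
proof -
  obtain n :: nat and vs where vs: "\<forall>a\<in>fock_block k. \<forall>b\<in>fock_block k.
      Re (\<rho> a b) = (\<Sum>i<n. vs i a * vs i b)"
    using psd_on_gram_decomposition[OF finite_fock_block psd_on_Re_density_matrix[OF assms finite_fock_block]]
    by blast
  have "block_trace \<rho> (P_DC pz) k
      = (\<Sum>a\<in>fock_block k. \<Sum>b\<in>fock_block k. Re (\<rho> a b) * Re (P_DC pz b a))"
    unfolding block_trace_def by (subst (1 2) P_DC_real) (simp add: Re_sum)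
  also have "\<dots> = (\<Sum>i<n. detector_form pz k (\<lambda>r. vs i (r, k - r)))"
    unfolding trace_gram_eq_sum_quad_form[OF vs] quad_form_P_DC_block ..
  finally have t: "block_trace \<rho> (P_DC pz) k = (\<Sum>i<n. detector_form pz k (\<lambda>r. vs i (r, k - r)))" .
  have w: "block_weight \<rho> k = (\<Sum>i<n. dot k (\<lambda>r. vs i (r, k - r)) (\<lambda>r. vs i (r, k - r)))"
    using trace_gram_eq_sum_sq[OF vs] unfolding block_weight_def
    by (simp add: sum_fock_block dot_def power2_eq_square)
  show ?thesis by (rule that[OF t w])
qed

lemma block_trace_P_DC_bounds:
  assumes "density_matrix \<rho>" and p: "0 \<le> pz" "pz \<le> 1"
  shows "0 \<le> block_trace \<rho> (P_DC pz) k"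
    and "block_trace \<rho> (P_DC pz) k \<le> block_weight \<rho> k"
    and "3 \<le> j \<Longrightarrow> j \<le> k \<Longrightarrow> lambda_min pz j * block_weight \<rho> k \<le> block_trace \<rho> (P_DC pz) k"
proof -
  obtain n :: nat and xs where
    t: "block_trace \<rho> (P_DC pz) k = (\<Sum>i<n. detector_form pz k (xs i))" and
    w: "block_weight \<rho> k = (\<Sum>i<n. dot k (xs i) (xs i))"
    using block_trace_P_DC_gram[OF assms(1)] .
  show "0 \<le> block_trace \<rho> (P_DC pz) k"
    unfolding t using p by (intro sum_nonneg detector_form_nonneg)
  show "block_trace \<rho> (P_DC pz) k \<le> block_weight \<rho> k"
    unfolding t w using p by (intro sum_mono detector_form_le_dot)
  assume j: "3 \<le> j" "j \<le> k"
  have "lambda_min pz j * dot k x x \<le> detector_form pz k x" for x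
  proof -
    have "lambda_min pz j \<le> lambda_min pz k" using p j(2) by (rule lambda_min_mono)
    then have "lambda_min pz j * dot k x x \<le> lambda_min pz k * dot k x x"
      by (rule mult_right_mono) (rule dot_self_nonneg)
    also have "\<dots> \<le> detector_form pz k x"
      using j p by (intro lambda_min_le_detector_form) simp_all
    finally show ?thesis .
  qed
  then show "lambda_min pz j * block_weight \<rho> k \<le> block_trace \<rho> (P_DC pz) k"
    unfolding t w sum_distrib_left by (intro sum_mono)
qed

lemma block_trace_Pi_N: "block_trace \<rho> (Pi_N N) k = (if k \<le> N then block_weight \<rho> k else 0)"
proof -
  have Pi: "Pi_N N b a = (if b = a \<and> k \<le> N then 1 else 0)" if "b \<in> fock_block k" for a b
    using that unfolding Pi_N_def Pi_tilde_def fock_block_def by (auto simp: sum.delta)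
  have "(\<Sum>a\<in>fock_block k. \<Sum>b\<in>fock_block k. \<rho> a b * Pi_N N b a)
      = (\<Sum>a\<in>fock_block k. if k \<le> N then \<rho> a a else 0)"
  proof (rule sum.cong[OF refl])
    fix a assume a: "a \<in> fock_block k"
    have "(\<Sum>b\<in>fock_block k. \<rho> a b * Pi_N N b a)
        = (\<Sum>b\<in>fock_block k. if b = a then (if k \<le> N then \<rho> a a else 0) else 0)"
      by (rule sum.cong) (auto simp: Pi)
    with a show "(\<Sum>b\<in>fock_block k. \<rho> a b * Pi_N N b a) = (if k \<le> N then \<rho> a a else 0)"
      by (simp add: finite_fock_block)
  qed
  then show ?thesis unfolding block_trace_def block_weight_def by (simp add: Re_sum)
qed

lemma infsum_ge_tail_bound:
  fixes w t :: "nat \<Rightarrow> real"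
  assumes w: "(w has_sum s) UNIV"
    and t: "\<And>k. 0 \<le> t k" "\<And>k. t k \<le> w k"
    and tail: "\<And>k. N < k \<Longrightarrow> c * w k \<le> t k"
  shows "c * (s - (\<Sum>k\<le>N. w k)) \<le> (\<Sum>\<^sub>\<infinity>k. t k)"
proof -
  have w_sum: "w summable_on A" for A
    using summable_on_subset_banach[OF has_sum_imp_summable[OF w] subset_UNIV] .
  have t_sum: "t summable_on UNIV"
    using t by (intro summable_on_comparison_test[OF w_sum]) auto
  have "{..N} \<union> {N<..} = UNIV" by auto
  then have "s = (\<Sum>\<^sub>\<infinity>k\<in>{..N} \<union> {N<..}. w k)"
    using infsumI[OF w] by simp
  also have "\<dots> = (\<Sum>k\<le>N. w k) + (\<Sum>\<^sub>\<infinity>k\<in>{N<..}. w k)"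
    by (subst infsum_Un_disjoint) (auto intro: w_sum)
  finally have "c * (s - (\<Sum>k\<le>N. w k)) = (\<Sum>\<^sub>\<infinity>k\<in>{N<..}. c * w k)"
    by (simp add: infsum_cmult_right')
  also have "\<dots> \<le> (\<Sum>\<^sub>\<infinity>k. t k)"
    using tail t by (intro infsum_mono_neutral summable_on_cmult_right w_sum t_sum) auto
  finally show ?thesis .
qed

lemma block_weight_has_sum:
  assumes "density_matrix \<rho>"
  shows "(block_weight \<rho> has_sum 1) UNIV"
proof -
  have "((\<lambda>a. \<rho> a a) has_sum 1) UNIV"
    using assms unfolding density_matrix_def by blast
  from has_sum_Re[OF this] have diag: "((\<lambda>a. Re (\<rho> a a)) has_sum 1) UNIV" by simp
  have inj: "inj_on snd (Sigma UNIV fock_block)"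
    by (rule inj_onI) (auto simp: fock_block_def)
  have "snd ` Sigma UNIV fock_block = UNIV"
    by (auto simp: fock_block_def image_iff intro!: bexI[of _ "(fst a + snd a, a)" for a])
  with diag has_sum_reindex[OF inj, of "\<lambda>a. Re (\<rho> a a)"]
  have "((\<lambda>ka. Re (\<rho> (snd ka) (snd ka))) has_sum 1) (Sigma UNIV fock_block)"
    by (simp add: comp_def)
  then show ?thesis
    by (rule has_sum_Sigma') (auto simp: block_weight_def finite_fock_block)
qed

lemma tr_block_Pi_N: "tr_block \<rho> (Pi_N N) = (\<Sum>k\<le>N. block_weight \<rho> k)"
proof -
  have "tr_block \<rho> (Pi_N N) = (\<Sum>\<^sub>\<infinity>k\<in>{..N}. block_weight \<rho> k)"
    unfolding tr_block_eq_infsum block_trace_Pi_N by (rule infsum_cong_neutral) auto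
  then show ?thesis by simp
qed

theorem corollary1:
  fixes \<rho> :: fock_op and pz q :: real and N :: nat
  assumes "density_matrix \<rho>"
    and "0 \<le> pz" and "pz \<le> 1"
    and "lambda_min pz (N + 1) > 0"
    and "tr_block \<rho> (P_DC pz) = q"
  shows "tr_block \<rho> (Pi_N N) \<ge> 1 - q / lambda_min pz (N + 1)"
proof -
  have "3 \<le> N + 1"
    using assms(4) lambda_min_1[of pz] lambda_min_2[of pz]
    by (cases "N = 0 \<or> N = 1") (auto simp: numeral_2_eq_2)
  then have "lambda_min pz (N + 1) * (1 - (\<Sum>k\<le>N. block_weight \<rho> k))
      \<le> (\<Sum>\<^sub>\<infinity>k. block_trace \<rho> (P_DC pz) k)"
    using block_trace_P_DC_bounds[OF assms(1-3)]
    by (intro infsum_ge_tail_bound[OF block_weight_has_sum[OF assms(1)]]) auto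
  then have "lambda_min pz (N + 1) * (1 - tr_block \<rho> (Pi_N N)) \<le> q"
    using assms(5) by (simp add: tr_block_Pi_N tr_block_eq_infsum[of \<rho> "P_DC pz"])
  with assms(4) have "1 - tr_block \<rho> (Pi_N N) \<le> q / lambda_min pz (N + 1)"
    by (simp add: pos_le_divide_eq mult.commute)
  then show ?thesis by simp
qed

end
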